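(* Let $(A,C,k)$ be an instance and let $W$ be an affordable committee satisfying EJR+. Then every AV-completion of $W$ has utilitarian ratio at least $\frac{1}{4\sqrt{k}}-\frac{1}{2k}$.
   Context: An instance $(A,C,k)$ consists of a finite nonempty candidate set $C$, voters $N=\{1,\dots,n\}$, approval sets $A_i\subseteq C$, and a committee size $1\le k\le |C|$. $N_c=\{i: c\in A_i\}$. A committee is $W\subseteq C$ with $|W|\le k$. $\mathrm{sw}(W)=\sum_i|A_i\cap W|$; the utilitarian ratio is $\mathrm{sw}(W)/\max\{\mathrm{sw}(W'):|W'|=k\}$. An AV-completion of $W$ is $W\cup T$ with $T\subseteq C\setminus W$, $|T|=k-|W|$, maximizing $\sum_{c\in T}|N_c|$. $W$ is affordable if there are $p_i:C\to\mathbb{R}_{\ge0}$ with $p_i(c)=0$ for $c\notin A_i$, $\sum_c p_i(c)\le k/n$, $\sum_i p_i(c)=1$ for $c\in W$, $\sum_i p_i(c)=0$ for $c\notin W$. $W$ satisfies EJR+ if for every $\ell\in\{1,\dots,k\}$ and every group $N'\subseteq N$ with $|N'|\ge \ell n/k$ and $\bigcap_{i\in N'}A_i\neq\emptyset$, either some $i\in N'$ has $|A_i\cap W|\ge\ell$ or $\bigcap_{i\in N'}A_i\subseteq W$. *)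

theory Defs
  imports "HOL-Analysis.Analysis"
begin

definition voters :: "nat \<Rightarrow> nat set" where
  "voters n = {1..n}"

definition supporters :: "nat \<Rightarrow> (nat \<Rightarrow> 'c set) \<Rightarrow> 'c \<Rightarrow> nat set" where
  "supporters n A c = {i \<in> voters n. c \<in> A i}"

definition is_instance :: "'c set \<Rightarrow> nat \<Rightarrow> (nat \<Rightarrow> 'c set) \<Rightarrow> nat \<Rightarrow> bool" where
  "is_instance C n A k \<longleftrightarrow> finite C \<and> C \<noteq> {} \<and> n \<ge> 1
      \<and> (\<forall>i \<in> voters n. A i \<subseteq> C) \<and> 1 \<le> k \<and> k \<le> card C"

definition committee :: "'c set \<Rightarrow> nat \<Rightarrow> 'c set \<Rightarrow> bool" where
  "committee C k W \<longleftrightarrow> W \<subseteq> C \<and> card W \<le> k"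

definition sw :: "nat \<Rightarrow> (nat \<Rightarrow> 'c set) \<Rightarrow> 'c set \<Rightarrow> nat" where
  "sw n A W = (\<Sum>i \<in> voters n. card (A i \<inter> W))"

definition opt_sw :: "'c set \<Rightarrow> nat \<Rightarrow> (nat \<Rightarrow> 'c set) \<Rightarrow> nat \<Rightarrow> nat" where
  "opt_sw C n A k = Max {sw n A W' | W'. W' \<subseteq> C \<and> card W' = k}"

definition util_ratio :: "'c set \<Rightarrow> nat \<Rightarrow> (nat \<Rightarrow> 'c set) \<Rightarrow> nat \<Rightarrow> 'c set \<Rightarrow> real" where
  "util_ratio C n A k W = real (sw n A W) / real (opt_sw C n A k)"

definition AV_completion :: "'c set \<Rightarrow> nat \<Rightarrow> (nat \<Rightarrow> 'c set) \<Rightarrow> nat \<Rightarrow> 'c set \<Rightarrow> 'c set \<Rightarrow> bool" where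
  "AV_completion C n A k W W2 \<longleftrightarrow> (\<exists>T. T \<subseteq> C - W \<and> card T = k - card W \<and> W2 = W \<union> T
      \<and> (\<forall>T'. T' \<subseteq> C - W \<and> card T' = k - card W \<longrightarrow>
            (\<Sum>c\<in>T'. card (supporters n A c)) \<le> (\<Sum>c\<in>T. card (supporters n A c))))"

definition affordable :: "'c set \<Rightarrow> nat \<Rightarrow> (nat \<Rightarrow> 'c set) \<Rightarrow> nat \<Rightarrow> 'c set \<Rightarrow> bool" where
  "affordable C n A k W \<longleftrightarrow> (\<exists>p :: nat \<Rightarrow> 'c \<Rightarrow> real.
      (\<forall>i \<in> voters n. \<forall>c \<in> C. p i c \<ge> 0)
    \<and> (\<forall>i \<in> voters n. \<forall>c \<in> C. c \<notin> A i \<longrightarrow> p i c = 0)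
    \<and> (\<forall>i \<in> voters n. (\<Sum>c\<in>C. p i c) \<le> real k / real n)
    \<and> (\<forall>c \<in> W. (\<Sum>i\<in>voters n. p i c) = 1)
    \<and> (\<forall>c \<in> C - W. (\<Sum>i\<in>voters n. p i c) = 0))"

definition EJR_plus :: "'c set \<Rightarrow> nat \<Rightarrow> (nat \<Rightarrow> 'c set) \<Rightarrow> nat \<Rightarrow> 'c set \<Rightarrow> bool" where
  "EJR_plus C n A k W \<longleftrightarrow> (\<forall>l \<in> {1..k}. \<forall>N' \<subseteq> voters n.
      real (card N') \<ge> real l * real n / real k \<and> (\<Inter>i\<in>N'. A i) \<noteq> {} \<and> N' \<noteq> {} \<longrightarrow>
      (\<exists>i \<in> N'. card (A i \<inter> W) \<ge> l) \<or> (\<Inter>i\<in>N'. A i) \<subseteq> W)"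

end

theory Submission
  imports Defs
begin

text \<open>Every candidate \<open>c\<close> outside \<open>W2\<close> satisfies \<open>k |N\<^sub>c| \<le> 4 sqrt k sw(W2)\<close>; summing over an
  optimal committee gives \<open>opt \<le> (1 + 4 sqrt k) sw(W2)\<close>, and \<open>1/(1 + 4 sqrt k) \<ge> 1/(4 sqrt k) - 1/(2k)\<close>.
  If \<open>|W| \<le> k/2\<close>, approval voting added at least \<open>k/2\<close> candidates, each with at least as many
  supporters as \<open>c\<close>. Otherwise affordability gives every member of \<open>W\<close> at least \<open>n/k\<close> supporters,
  so \<open>n \<le> 2 sw(W)\<close>; and EJR+ says that fewer than \<open>l n/k\<close> supporters of \<open>c\<close> approve fewer than \<open>l\<close>
  members of \<open>W\<close>, whence \<open>l (k |N\<^sub>c| - l n) \<le> k sw(W)\<close> for every level \<open>l \<le> k\<close>. Taking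
  \<open>l \<approx> k |N\<^sub>c| / (2 n)\<close> yields \<open>k |N\<^sub>c| \<le> 4 sqrt k sw(W)\<close>.\<close>

lemma sw_eq_sum_supporters:
  assumes "finite W"
  shows "sw n A W = (\<Sum>c\<in>W. card (supporters n A c))"
proof -
  have "sw n A W = (\<Sum>i\<in>voters n. card {c \<in> W. c \<in> A i})"
    unfolding sw_def by (intro sum.cong arg_cong[where f = card]) auto
  also have "\<dots> = (\<Sum>c\<in>W. card {i \<in> voters n. c \<in> A i})"
    using sum.swap_restrict[of "voters n" W "\<lambda>_ _. 1::nat" "\<lambda>i c. c \<in> A i"] assms
    by (simp add: voters_def)
  finally show ?thesis by (simp add: supporters_def)
qed

lemma sw_mono:
  assumes "W \<subseteq> W'" "finite W'"
  shows "sw n A W \<le> sw n A W'"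
  unfolding sw_def by (intro sum_mono card_mono) (use assms in auto)

lemma card_supporters_le: "card (supporters n A c) \<le> n"
proof -
  have "card (supporters n A c) \<le> card (voters n)"
    by (rule card_mono) (auto simp: supporters_def voters_def)
  then show ?thesis by (simp add: voters_def)
qed

lemma opt_sw_attained:
  assumes "finite C" "k \<le> card C"
  obtains Opt where "Opt \<subseteq> C" "card Opt = k" "opt_sw C n A k = sw n A Opt"
proof -
  let ?S = "{sw n A W' | W'. W' \<subseteq> C \<and> card W' = k}"
  have "?S \<subseteq> sw n A ` Pow C" by auto
  then have "finite ?S" by (rule finite_subset) (simp add: assms(1))
  moreover obtain B where "B \<subseteq> C" "card B = k"
    using obtain_subset_with_card_n[OF assms(2)] by metis
  then have "?S \<noteq> {}" by blast
  ultimately have "Max ?S \<in> ?S" by (rule Max_in)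
  then obtain Opt where "Opt \<subseteq> C" "card Opt = k" "Max ?S = sw n A Opt" by blast
  moreover have "opt_sw C n A k = Max ?S" unfolding opt_sw_def by (rule refl)
  ultimately show ?thesis using that by simp
qed

lemma affordable_supporters_ge:
  assumes "affordable C n A k W" "finite C" "n \<ge> 1" "W \<subseteq> C" "c \<in> W"
  shows "real n \<le> real k * real (card (supporters n A c))"
proof -
  obtain p :: "nat \<Rightarrow> _ \<Rightarrow> real" where
    nonneg: "\<forall>i \<in> voters n. \<forall>c \<in> C. p i c \<ge> 0" and
    approved: "\<forall>i \<in> voters n. \<forall>c \<in> C. c \<notin> A i \<longrightarrow> p i c = 0" and
    budget: "\<forall>i \<in> voters n. (\<Sum>c\<in>C. p i c) \<le> real k / real n" and
    paid: "\<forall>c \<in> W. (\<Sum>i\<in>voters n. p i c) = 1"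
    using assms(1) unfolding affordable_def by blast
  have c: "c \<in> C" using assms(4,5) by blast
  have share: "p i c \<le> real k / real n" if "i \<in> voters n" for i
    using member_le_sum[of c C "p i"] nonneg budget that c assms(2) by fastforce
  have "1 = (\<Sum>i\<in>voters n. p i c)" using paid assms(5) by simp
  also have "\<dots> = (\<Sum>i\<in>supporters n A c. p i c)"
    by (rule sum.mono_neutral_right) (use approved c in \<open>auto simp: supporters_def voters_def\<close>)
  also have "\<dots> \<le> real (card (supporters n A c)) * (real k / real n)"
    by (intro sum_bounded_above) (auto simp: share supporters_def)
  finally show ?thesis using assms(3) by (simp add: field_simps)
qed

lemma affordable_sw_ge:
  assumes "affordable C n A k W" "finite C" "n \<ge> 1" "W \<subseteq> C"
  shows "real (card W) * real n \<le> real k * real (sw n A W)"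
proof -
  have fW: "finite W" using assms(4,2) by (rule finite_subset)
  have "real (card W) * real n = (\<Sum>c\<in>W. real n)" by simp
  also have "\<dots> \<le> (\<Sum>c\<in>W. real k * real (card (supporters n A c)))"
    by (intro sum_mono affordable_supporters_ge[OF assms])
  also have "\<dots> = real k * real (sw n A W)"
    by (simp add: sw_eq_sum_supporters[OF fW] sum_distrib_left)
  finally show ?thesis .
qed

lemma EJR_plus_underrepresented_supporters:
  assumes "EJR_plus C n A k W" "c \<notin> W" "l \<in> {1..k}" "n \<ge> 1"
  shows "real (card {i \<in> supporters n A c. card (A i \<inter> W) < l}) * real k < real l * real n"
proof (rule ccontr)
  let ?N = "{i \<in> supporters n A c. card (A i \<inter> W) < l}"
  assume "\<not> ?thesis"
  with assms(3) have large: "real (card ?N) \<ge> real l * real n / real k"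
    by (simp add: field_simps)
  moreover have "real l * real n / real k > 0" using assms(3,4) by auto
  ultimately have "0 < real (card ?N)" by linarith
  then have nonempty: "?N \<noteq> {}" by (metis card.empty of_nat_0 less_irrefl)
  have c: "c \<in> (\<Inter>i\<in>?N. A i)" by (auto simp: supporters_def)
  then have cohesive: "(\<Inter>i\<in>?N. A i) \<noteq> {}" by blast
  have N_voters: "?N \<subseteq> voters n" by (auto simp: supporters_def)
  have EJR: "\<forall>N' \<subseteq> voters n. real (card N') \<ge> real l * real n / real k
      \<and> (\<Inter>i\<in>N'. A i) \<noteq> {} \<and> N' \<noteq> {}
      \<longrightarrow> (\<exists>i \<in> N'. card (A i \<inter> W) \<ge> l) \<or> (\<Inter>i\<in>N'. A i) \<subseteq> W"
    using assms(1,3) unfolding EJR_plus_def by (rule bspec)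
  have "(\<exists>i \<in> ?N. card (A i \<inter> W) \<ge> l) \<or> (\<Inter>i\<in>?N. A i) \<subseteq> W"
    by (rule EJR[rule_format, OF N_voters conjI[OF large conjI[OF cohesive nonempty]]])
  then show False using c assms(2) by auto
qed

lemma EJR_plus_level_bound:
  assumes "EJR_plus C n A k W" "c \<notin> W" "l \<in> {1..k}" "n \<ge> 1"
  shows "real l * (real k * real (card (supporters n A c)) - real l * real n)
           \<le> real k * real (sw n A W)"
proof -
  let ?Q = "{i \<in> supporters n A c. card (A i \<inter> W) < l}"
  let ?G = "{i \<in> supporters n A c. card (A i \<inter> W) \<ge> l}"
  have fin: "finite (supporters n A c)" by (simp add: supporters_def voters_def)
  have "card (supporters n A c) = card (?Q \<union> ?G)"
    by (rule arg_cong[where f = card]) auto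
  also have "\<dots> = card ?Q + card ?G"
    using fin by (intro card_Un_disjoint) auto
  finally have split: "card (supporters n A c) = card ?Q + card ?G" .
  have "l * card ?G = (\<Sum>i\<in>?G. l)" by simp
  also have "\<dots> \<le> (\<Sum>i\<in>?G. card (A i \<inter> W))" by (rule sum_mono) auto
  also have "\<dots> \<le> sw n A W"
    unfolding sw_def by (rule sum_mono2) (auto simp: supporters_def voters_def)
  finally have G: "real l * real (card ?G) \<le> real (sw n A W)"
    by (metis of_nat_le_iff of_nat_mult)
  have "real l * (real k * real (card (supporters n A c)) - real l * real n)
        \<le> real l * (real k * real (card (supporters n A c)) - real (card ?Q) * real k)"
    using EJR_plus_underrepresented_supporters[OF assms] by (intro mult_left_mono) auto
  also have "\<dots> = real k * (real l * real (card ?G))" by (simp add: split algebra_simps)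
  also have "\<dots> \<le> real k * real (sw n A W)" using G by (intro mult_left_mono) auto
  finally show ?thesis .
qed

lemma floor_half_product_ge:
  fixes y :: real
  assumes "y \<ge> 0"
  shows "real (nat \<lfloor>y / 2\<rfloor>) * (y - real (nat \<lfloor>y / 2\<rfloor>)) \<ge> y\<^sup>2 / 4 - 1"
proof -
  define d where "d = y / 2 - real (nat \<lfloor>y / 2\<rfloor>)"
  have "0 \<le> d" "d \<le> 1" using assms by (simp_all add: d_def) linarith+
  then have "d\<^sup>2 \<le> 1" by (simp add: power_le_one)
  moreover have "real (nat \<lfloor>y / 2\<rfloor>) * (y - real (nat \<lfloor>y / 2\<rfloor>)) = y\<^sup>2 / 4 - d\<^sup>2"
    by (simp add: d_def power2_eq_square algebra_simps)
  ultimately show ?thesis by linarith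
qed

lemma mult_le_square_sub_four:
  fixes r y :: real
  assumes "1 \<le> r" "2 * r < y" "y \<le> r\<^sup>2"
  shows "r * y \<le> y\<^sup>2 - 4"
proof -
  have "2 * r * r \<le> y * (y - r)"
    using assms(1,2) mult_mono[of "2 * r" y r "y - r"] by linarith
  moreover have "r * r \<ge> 2"
    using assms by (simp add: power2_eq_square)
  ultimately show ?thesis by (simp add: power2_eq_square algebra_simps)
qed

text \<open>The witness level is \<open>l = \<lfloor>y/2\<rfloor>\<close> for \<open>y = k a / n\<close>, an integer maximiser of \<open>l (y - l)\<close>.\<close>

lemma sqrt_bound_from_levels:
  fixes a n S :: real and k :: nat
  assumes "k \<ge> 1" "n > 0" "a \<le> n" "n \<le> 2 * S"
    and levels: "\<And>l. l \<in> {1..k} \<Longrightarrow> real l * (real k * a - real l * n) \<le> real k * S"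
  shows "real k * a \<le> 4 * sqrt (real k) * S"
proof (cases "real k * a \<le> 2 * sqrt (real k) * n")
  case True
  moreover have "2 * sqrt (real k) * n \<le> 2 * sqrt (real k) * (2 * S)"
    using assms(4) by (intro mult_left_mono) auto
  ultimately show ?thesis by linarith
next
  case False
  define r where "r = sqrt (real k)"
  define y where "y = real k * a / n"
  define l where "l = nat \<lfloor>y / 2\<rfloor>"
  have r: "r \<ge> 1" "real k = r\<^sup>2" using assms(1) by (auto simp: r_def)
  have ka: "real k * a = y * n" using assms(2) by (simp add: y_def)
  have "2 * r < y" using False assms(2) by (simp add: ka r_def)
  have "real k * a \<le> real k * n" using assms(3) by (intro mult_left_mono) auto
  then have "y \<le> real k" using assms(2) by (simp add: y_def divide_le_eq)
  have "1 \<le> \<lfloor>y / 2\<rfloor>" "\<lfloor>y / 2\<rfloor> \<le> int k"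
    using \<open>2 * r < y\<close> \<open>y \<le> real k\<close> r(1) by (simp_all add: floor_le_iff)
  then have "l \<in> {1..k}" by (auto simp: l_def le_nat_iff nat_le_iff)
  then have "real l * (real k * a - real l * n) \<le> real k * S" by (rule levels)
  moreover have "n * (real l * (y - real l)) = real l * (real k * a - real l * n)"
    unfolding ka by (simp add: algebra_simps)
  ultimately have "n * (real l * (y - real l)) \<le> real k * S" by linarith
  moreover have "n * (y\<^sup>2 / 4 - 1) \<le> n * (real l * (y - real l))"
    unfolding l_def using \<open>2 * r < y\<close> r(1) assms(2)
    by (intro mult_left_mono floor_half_product_ge) auto
  ultimately have kS: "n * (y\<^sup>2 / 4 - 1) \<le> real k * S" by linarith
  have "r * y \<le> y\<^sup>2 - 4"
    using \<open>2 * r < y\<close> \<open>y \<le> real k\<close> r by (intro mult_le_square_sub_four) auto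
  have "real k * (real k * a) = r * (r * y) * n"
    by (simp only: ka) (simp add: r(2) power2_eq_square)
  also have "\<dots> \<le> r * (y\<^sup>2 - 4) * n"
    using \<open>r * y \<le> y\<^sup>2 - 4\<close> r(1) assms(2) by (intro mult_right_mono mult_left_mono) auto
  also have "\<dots> = 4 * r * (n * (y\<^sup>2 / 4 - 1))" by (simp add: algebra_simps)
  also have "\<dots> \<le> 4 * r * (real k * S)" using kS r(1) by (intro mult_left_mono) auto
  finally have "real k * (real k * a) \<le> real k * (4 * r * S)" by (simp add: algebra_simps)
  then show ?thesis using assms(1) by (simp add: r_def)
qed

lemma max_weight_subset_ge:
  fixes f :: "'a \<Rightarrow> nat"
  assumes "finite T" "T \<subseteq> D"
    and optimal: "\<And>T'. T' \<subseteq> D \<Longrightarrow> card T' = card T \<Longrightarrow> sum f T' \<le> sum f T"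
    and "c \<in> D - T"
  shows "card T * f c \<le> sum f T"
proof -
  have "f c \<le> f d" if "d \<in> T" for d
  proof -
    let ?T' = "insert c (T - {d})"
    have "card T > 0" using assms(1) that by (auto simp: card_gt_0_iff)
    then have "?T' \<subseteq> D" "card ?T' = card T"
      using assms(1,2,4) that by (auto simp: card_insert_if card_Diff_singleton_if)
    then have "sum f ?T' \<le> sum f T" by (rule optimal)
    then show ?thesis
      using assms(1,4) that by (simp add: sum.remove[of T d])
  qed
  then show ?thesis using sum_bounded_below[of T "f c" f] by simp
qed

lemma AV_completion_supporters_bound:
  assumes "finite C" "W \<subseteq> C" "AV_completion C n A k W W2" "c \<in> C - W2"
  shows "(k - card W) * card (supporters n A c) \<le> sw n A W2"
proof -
  let ?sc = "\<lambda>c. card (supporters n A c)"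
  obtain T where T_new: "T \<subseteq> C - W" and cT: "card T = k - card W" and W2: "W2 = W \<union> T"
    and AV: "\<forall>T'. T' \<subseteq> C - W \<and> card T' = k - card W \<longrightarrow> sum ?sc T' \<le> sum ?sc T"
    using assms(3) unfolding AV_completion_def by blast
  have optimal: "sum ?sc T' \<le> sum ?sc T" if "T' \<subseteq> C - W" "card T' = card T" for T'
    using AV that unfolding cT by blast
  have T_C: "T \<subseteq> C" and W2C: "W2 \<subseteq> C" using T_new W2 assms(2) by auto
  have fT: "finite T" using T_C assms(1) by (rule finite_subset)
  have fW2: "finite W2" using W2C assms(1) by (rule finite_subset)
  have "card T * ?sc c \<le> sum ?sc T"
    by (rule max_weight_subset_ge[OF fT T_new optimal]) (use assms(4) W2 in auto)
  also have "\<dots> \<le> sw n A W2"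
    unfolding sw_eq_sum_supporters[OF fW2] using fW2 W2 by (intro sum_mono2) auto
  finally show ?thesis unfolding cT .
qed

lemma AV_completion_outside_bound:
  assumes "is_instance C n A k" "committee C k W" "affordable C n A k W" "EJR_plus C n A k W"
    and "AV_completion C n A k W W2" "c \<in> C - W2"
  shows "real k * real (card (supporters n A c)) \<le> 4 * sqrt (real k) * real (sw n A W2)"
proof -
  let ?sc = "\<lambda>c. card (supporters n A c)"
  have fC: "finite C" and n1: "n \<ge> 1" and k1: "k \<ge> 1"
    using assms(1) by (auto simp: is_instance_def)
  have WC: "W \<subseteq> C" and "card W \<le> k" using assms(2) by (auto simp: committee_def)
  have W2: "W \<subseteq> W2" "W2 \<subseteq> C" using assms(5) WC by (auto simp: AV_completion_def)
  have fW2: "finite W2" using W2(2) fC by (rule finite_subset)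
  have "1 \<le> sqrt (real k)" using k1 by simp
  then have sqrt_k: "2 \<le> 4 * sqrt (real k)" by linarith
  show ?thesis
  proof (cases "k \<le> 2 * (k - card W)")
    case True
    have "k * ?sc c \<le> 2 * (k - card W) * ?sc c" by (rule mult_right_mono[OF True]) simp
    also have "\<dots> \<le> 2 * sw n A W2"
      using AV_completion_supporters_bound[OF fC WC assms(5,6)] by (simp add: mult.assoc)
    finally have "real (k * ?sc c) \<le> real (2 * sw n A W2)" by (rule of_nat_mono)
    then have "real k * real (?sc c) \<le> 2 * real (sw n A W2)" by simp
    also have "\<dots> \<le> 4 * sqrt (real k) * real (sw n A W2)"
      using sqrt_k by (intro mult_right_mono) auto
    finally show ?thesis .
  next
    case False
    then have "real k < 2 * real (card W)" using \<open>card W \<le> k\<close> by linarith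
    then have "real k * real n < 2 * (real (card W) * real n)" using n1 by simp
    also have "\<dots> \<le> 2 * (real k * real (sw n A W))"
      using affordable_sw_ge[OF assms(3) fC n1 WC] by simp
    finally have "real n \<le> 2 * real (sw n A W)" using k1 by simp
    have "real k * real (?sc c) \<le> 4 * sqrt (real k) * real (sw n A W)"
    proof (rule sqrt_bound_from_levels)
      fix l assume "l \<in> {1..k}"
      with assms(6) W2 n1 show "real l * (real k * real (?sc c) - real l * real n)
          \<le> real k * real (sw n A W)"
        by (intro EJR_plus_level_bound[OF assms(4)]) auto
    qed (use k1 n1 card_supporters_le \<open>real n \<le> 2 * real (sw n A W)\<close> in auto)
    also have "\<dots> \<le> 4 * sqrt (real k) * real (sw n A W2)"
      using sw_mono[OF W2(1) fW2] by (intro mult_left_mono) auto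
    finally show ?thesis .
  qed
qed

lemma opt_sw_le_AV_completion:
  assumes "is_instance C n A k" "committee C k W" "affordable C n A k W" "EJR_plus C n A k W"
    and "AV_completion C n A k W W2"
  shows "real (opt_sw C n A k) \<le> (1 + 4 * sqrt (real k)) * real (sw n A W2)"
proof -
  let ?sc = "\<lambda>c. card (supporters n A c)"
  let ?M = "4 * sqrt (real k) * real (sw n A W2)"
  have fC: "finite C" and "k \<le> card C" and k1: "k \<ge> 1"
    using assms(1) by (auto simp: is_instance_def)
  obtain Opt where OC: "Opt \<subseteq> C" and cO: "card Opt = k" and opt: "opt_sw C n A k = sw n A Opt"
    using opt_sw_attained[OF fC \<open>k \<le> card C\<close>] .
  have fO: "finite Opt" using OC fC by (rule finite_subset)
  have "W2 \<subseteq> C" using assms(2,5) by (auto simp: AV_completion_def committee_def)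
  then have fW2: "finite W2" using fC by (rule finite_subset)
  have "sw n A Opt = sum ?sc (Opt \<inter> W2) + sum ?sc (Opt - W2)"
    using fO by (simp add: sw_eq_sum_supporters sum.Int_Diff)
  also have "sum ?sc (Opt \<inter> W2) \<le> sw n A W2"
    using fW2 by (simp add: sw_eq_sum_supporters sum_mono2)
  finally have split: "real (sw n A Opt) \<le> real (sw n A W2) + real (sum ?sc (Opt - W2))"
    by linarith
  have "real k * real (sum ?sc (Opt - W2)) \<le> real (card (Opt - W2)) * ?M"
    unfolding of_nat_sum sum_distrib_left
    by (intro sum_bounded_above AV_completion_outside_bound[OF assms]) (use OC in auto)
  also have "\<dots> \<le> real k * ?M"
    using card_mono[OF fO, of "Opt - W2"] cO by (intro mult_right_mono) auto
  finally have "real (sum ?sc (Opt - W2)) \<le> ?M" using k1 by simp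
  moreover have "(1 + 4 * sqrt (real k)) * real (sw n A W2) = real (sw n A W2) + ?M"
    by (simp add: algebra_simps)
  ultimately show ?thesis using split opt by linarith
qed

lemma inverse_sqrt_bound:
  fixes r :: real
  assumes "r \<ge> 1"
  shows "1 / (4 * r) - 1 / (2 * r\<^sup>2) \<le> 1 / (1 + 4 * r)"
proof -
  have "1 / (4 * r) - 1 / (1 + 4 * r) = 1 / (4 * r * (1 + 4 * r))"
    using assms by (simp add: field_simps)
  also have "\<dots> \<le> 1 / (2 * r\<^sup>2)"
    using assms by (intro frac_le) (auto simp: power2_eq_square algebra_simps)
  finally show ?thesis by linarith
qed

theorem corollary2:
  fixes C :: "'c set" and n k :: nat and A :: "nat \<Rightarrow> 'c set" and W W2 :: "'c set"
  assumes "is_instance C n A k"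
    and "committee C k W"
    and "affordable C n A k W"
    and "EJR_plus C n A k W"
    and "AV_completion C n A k W W2"
    and "opt_sw C n A k > 0"
  shows "util_ratio C n A k W2 \<ge> 1 / (4 * sqrt (real k)) - 1 / (2 * real k)"
proof -
  define r where "r = sqrt (real k)"
  have r: "r \<ge> 1" "real k = r\<^sup>2" using assms(1) by (auto simp: r_def is_instance_def)
  have "real (opt_sw C n A k) \<le> (1 + 4 * r) * real (sw n A W2)"
    unfolding r_def by (rule opt_sw_le_AV_completion[OF assms(1-5)])
  then have "1 / (1 + 4 * r) \<le> util_ratio C n A k W2"
    using assms(6) r(1) unfolding util_ratio_def by (simp add: field_simps)
  moreover have "1 / (4 * r) - 1 / (2 * real k) \<le> 1 / (1 + 4 * r)"
    unfolding r(2) using r(1) by (rule inverse_sqrt_bound)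
  ultimately show ?thesis unfolding r_def by linarith
qed

end
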